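(* Let $(\Omega,\mathcal{F})$, $Q$, $\mathcal{C}_1,\dots,\mathcal{C}_t$ and the sequences $S_{n,i},P_{n,i}$ be as in the context, and assume $\sup_{n,i}\int dS_{n,i}<\infty$ (Assumption A). Then $\sup_{n\ge1,\,1\le i\le t}I(P_{n,i}|S_{n,i})<\infty$.
   Context: $(\Omega,\mathcal{F})$ is a measurable space, $Q$ a probability measure, $\mathcal{C}_1,\dots,\mathcal{C}_t$ variation-closed convex sets of probability measures on $(\Omega,\mathcal{F})$, and there exists $V\in\bigcap_{i=1}^t\mathcal{C}_i$ with $I(V|Q)<\infty$. For a probability measure $P$ and finite measure $R$, $I(P|R)=\int\ln(dP/dR)\,dP$ if $P\ll R$, $+\infty$ otherwise (conventions $\ln0=-\infty$, $\ln(a/0)=+\infty$, $0\cdot(\pm\infty)=0$). For a finite measure $S$, $\pi_i(S)$ is the $R\in\mathcal{C}_i$ with $I(R|S)=\inf_{P\in\mathcal{C}_i}I(P|S)<\infty$. Algorithm: $S_{0,i}=P_{0,i}=Q$; for $n=1,2,\dots$ and $i=1,\dots,t$ in order, $\frac{dS_{n,1}}{dQ}=\frac{dP_{n-1,t}}{dQ}(\frac{dP_{n-1,1}}{dS_{n-1,1}})^{-1}$, $\frac{dS_{n,i}}{dQ}=\frac{dP_{n,i-1}}{dQ}(\frac{dP_{n-1,i}}{dS_{n-1,i}})^{-1}$ for $i\ge2$, and $P_{n,i}=\pi_i(S_{n,i})$. *)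

theory Defs
  imports "HOL-Probability.Probability"
begin

definition prob_on :: "'a measure \<Rightarrow> 'a measure \<Rightarrow> bool" where
  "prob_on Q P \<longleftrightarrow> prob_space P \<and> sets P = sets Q"

definition mix :: "real \<Rightarrow> 'a measure \<Rightarrow> 'a measure \<Rightarrow> 'a measure" where
  "mix l P R = measure_of (space P) (sets P)
     (\<lambda>A. ennreal l * emeasure P A + ennreal (1 - l) * emeasure R A)"

definition convex_meas_set :: "'a measure set \<Rightarrow> bool" where
  "convex_meas_set C \<longleftrightarrow>
     (\<forall>P\<in>C. \<forall>R\<in>C. \<forall>l\<in>{0..1}. mix l P R \<in> C)"

definition tv_dist :: "'a measure \<Rightarrow> 'a measure \<Rightarrow> real" where
  "tv_dist P R = (SUP A\<in>sets P. \<bar>measure P A - measure R A\<bar>)"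

definition variation_closed :: "'a measure \<Rightarrow> 'a measure set \<Rightarrow> bool" where
  "variation_closed Q C \<longleftrightarrow>
     (\<forall>X P. (\<forall>k. X k \<in> C) \<longrightarrow> prob_on Q P \<longrightarrow>
        (\<lambda>k. tv_dist (X k) P) \<longlonglongrightarrow> 0 \<longrightarrow> P \<in> C)"

definition lnE :: "ennreal \<Rightarrow> ereal" where
  "lnE x = (if x = 0 then - \<infinity> else if x = \<infinity> then \<infinity> else ereal (ln (enn2real x)))"

text \<open>I-divergence I(P|R) = \<integral> ln(dP/dR) dP if P \<ll> R, +\<infinity> otherwise
  (integral of an extended-real function as positive minus negative part).\<close>
definition I_div :: "'a measure \<Rightarrow> 'a measure \<Rightarrow> ereal" where
  "I_div P R = (if absolutely_continuous R P
     then enn2ereal (\<integral>\<^sup>+x. e2ennreal (max 0 (lnE (RN_deriv R P x))) \<partial>P)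
        - enn2ereal (\<integral>\<^sup>+x. e2ennreal (max 0 (- lnE (RN_deriv R P x))) \<partial>P)
     else \<infinity>)"

definition is_I_proj :: "'a measure set \<Rightarrow> 'a measure \<Rightarrow> 'a measure \<Rightarrow> bool" where
  "is_I_proj C S R \<longleftrightarrow> R \<in> C \<and> I_div R S = (INF P\<in>C. I_div P S) \<and> I_div R S < \<infinity>"

end

(*
  Fix V in all C i with I(V|Q) < oo and write I_V X for I(V|X). The I-projection P of S onto a
  convex set containing V is minimal along the segment towards V; the first-order condition at P
  gives the Pythagorean inequality I(V|P) + I(P|S) <= I(V|S). Taking logarithms in the
  multiplicative update of S n i turns it into I_V (S n i) + I_V (P (n-1) i) =
  I_V (prev n i) + I_V (S (n-1) i), where prev n i is the projection computed just before P n i.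
  Hence the gaps I_V (S n i) - I_V (P n i) of one cycle telescope: their sum plus I_V (P n t)
  equals I_V Q. Each gap dominates I(P n i | S n i) >= -(mass of S n i) >= -B, and
  I_V (P n t) >= -1 because P n t is a probability, so each single gap, and with it
  I(P n i | S n i), is at most I_V Q + 1 + (t - 1) B.
*)
theory Submission
  imports Defs
begin

(* As ln 0 = 0 in HOL, xlnx 0 = 0 is the continuous extension. *)
definition xlnx :: "real \<Rightarrow> real" where "xlnx x = x * ln x"

lemma borel_measurable_xlnx[measurable]:
  assumes [measurable]: "f \<in> borel_measurable M"
  shows "(\<lambda>x. xlnx (f x)) \<in> borel_measurable M"
  unfolding xlnx_def by measurable

lemma xlnx_ge_tangent:
  assumes "0 \<le> x" "0 < y"
  shows "xlnx y + (x - y) * (1 + ln y) \<le> xlnx x"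
proof (cases "x = 0")
  case True
  then show ?thesis using assms by (simp add: xlnx_def algebra_simps)
next
  case False
  with assms have "0 < x" by simp
  have "ln (y / x) \<le> y / x - 1"
    using \<open>0 < x\<close> assms by (intro ln_le_minus_one) simp
  then have "x * (ln y - ln x) \<le> x * (y / x - 1)"
    using \<open>0 < x\<close> assms by (intro mult_left_mono) (auto simp: ln_div)
  then show ?thesis using \<open>0 < x\<close> by (simp add: xlnx_def algebra_simps)
qed

lemma xlnx_ge_minus_one: "0 \<le> x \<Longrightarrow> -1 \<le> xlnx x"
  using xlnx_ge_tangent[of x 1] by (simp add: xlnx_def)

lemma xlnx_convex:
  assumes "0 \<le> a" "0 \<le> b" "0 \<le> l" "l \<le> 1"
  shows "xlnx (l * a + (1 - l) * b) \<le> l * xlnx a + (1 - l) * xlnx b"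
proof (cases "l * a + (1 - l) * b = 0")
  case True
  with assms have "l * a = 0" "(1 - l) * b = 0"
    by (smt (verit) mult_nonneg_nonneg)+
  then have "l * xlnx a = 0" "(1 - l) * xlnx b = 0"
    unfolding xlnx_def by (metis mult.assoc mult_zero_left)+
  moreover have "xlnx (l * a + (1 - l) * b) = 0" using True by (simp add: xlnx_def)
  ultimately show ?thesis by linarith
next
  case False
  define z where "z = l * a + (1 - l) * b"
  have "0 < z" using False assms unfolding z_def by (smt (verit) mult_nonneg_nonneg)
  have "l * (xlnx z + (a - z) * (1 + ln z)) + (1 - l) * (xlnx z + (b - z) * (1 + ln z))
      \<le> l * xlnx a + (1 - l) * xlnx b"
    using xlnx_ge_tangent \<open>0 < z\<close> assms by (intro add_mono mult_left_mono) auto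
  moreover have "l * (xlnx z + (a - z) * (1 + ln z)) + (1 - l) * (xlnx z + (b - z) * (1 + ln z)) = xlnx z"
    unfolding z_def by (simp add: algebra_simps)
  ultimately show ?thesis unfolding z_def by simp
qed

lemma xlnx_mix_integrable:
  assumes "finite_measure M"
    and [measurable]: "f \<in> borel_measurable M" "g \<in> borel_measurable M"
    and f_nonneg: "\<And>x. 0 \<le> f x" and g_nonneg: "\<And>x. 0 \<le> g x"
    and int_f: "integrable M (\<lambda>x. xlnx (f x))" and int_g: "integrable M (\<lambda>x. xlnx (g x))"
    and a: "0 \<le> a" "a \<le> 1"
  shows "integrable M (\<lambda>x. xlnx ((1 - a) * f x + a * g x))"
proof (rule Bochner_Integration.integrable_bound)
  interpret finite_measure M by fact
  show "integrable M (\<lambda>x. 1 + \<bar>xlnx (f x)\<bar> + \<bar>xlnx (g x)\<bar>)"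
    using int_f int_g by auto
  show "AE x in M. norm (xlnx ((1 - a) * f x + a * g x)) \<le> norm (1 + \<bar>xlnx (f x)\<bar> + \<bar>xlnx (g x)\<bar>)"
  proof (intro AE_I2)
    fix x
    have "-1 \<le> xlnx ((1 - a) * f x + a * g x)"
      using a f_nonneg g_nonneg by (intro xlnx_ge_minus_one add_nonneg_nonneg mult_nonneg_nonneg) auto
    moreover have "xlnx ((1 - a) * f x + (1 - (1 - a)) * g x) \<le> (1 - a) * xlnx (f x) + (1 - (1 - a)) * xlnx (g x)"
      using a f_nonneg g_nonneg by (intro xlnx_convex) auto
    moreover have "(1 - a) * xlnx (f x) + a * xlnx (g x) \<le> \<bar>xlnx (f x)\<bar> + \<bar>xlnx (g x)\<bar>"
      using a by (intro add_mono; smt (verit) mult_left_le_one_le abs_ge_self mult_left_mono)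
    ultimately show "norm (xlnx ((1 - a) * f x + a * g x)) \<le> norm (1 + \<bar>xlnx (f x)\<bar> + \<bar>xlnx (g x)\<bar>)"
      by simp
  qed
qed measurable

lemma borel_measurable_lnE[measurable]:
  assumes [measurable]: "f \<in> borel_measurable M"
  shows "(\<lambda>x. lnE (f x)) \<in> borel_measurable M"
  unfolding lnE_def by measurable

lemma ennreal_mult_lnE_parts:
  assumes "r \<noteq> \<infinity>"
  shows "r * e2ennreal (max 0 (lnE r)) = ennreal (xlnx (enn2real r))"
    and "r * e2ennreal (max 0 (- lnE r)) = ennreal (- xlnx (enn2real r))"
proof -
  have "r * e2ennreal (max 0 (lnE r)) = ennreal (xlnx (enn2real r)) \<and>
        r * e2ennreal (max 0 (- lnE r)) = ennreal (- xlnx (enn2real r))"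
  proof (cases "r = 0")
    case False
    with assms obtain u where u: "r = ennreal u" "0 < u"
      by (cases r) (auto simp: top_ennreal_def)
    then have "max 0 (lnE (ennreal u)) = ereal (max 0 (ln u))" "max 0 (- lnE (ennreal u)) = ereal (max 0 (- ln u))"
      using assms by (simp_all add: lnE_def max_def)
    moreover have "ennreal u * ennreal (max 0 (ln u)) = ennreal (xlnx u)"
      and "ennreal u * ennreal (max 0 (- ln u)) = ennreal (- xlnx u)"
      using u(2) by (simp_all add: ennreal_mult'[symmetric] xlnx_def max_def mult_le_0_iff ennreal_neg)
    ultimately show ?thesis unfolding u(1) using u(2) by (simp only: e2ennreal_ereal) simp
  qed (simp add: xlnx_def)
  then show "r * e2ennreal (max 0 (lnE r)) = ennreal (xlnx (enn2real r))"
    and "r * e2ennreal (max 0 (- lnE r)) = ennreal (- xlnx (enn2real r))" by auto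
qed

context
  fixes X Y :: "'a measure"
  assumes X: "finite_measure X" and Y: "prob_space Y" and sets_Y: "sets Y = sets X"
    and ac: "absolutely_continuous X Y"
begin

interpretation X: finite_measure X by (fact X)
interpretation Y: prob_space Y by (fact Y)

lemma nn_integral_lnE_RN_deriv:
  assumes "\<And>r. r \<noteq> \<infinity> \<Longrightarrow> r * e2ennreal (h (lnE r)) = ennreal (k (enn2real r))"
    and [measurable]: "h \<in> borel_measurable borel" "k \<in> borel_measurable borel"
  shows "(\<integral>\<^sup>+x. e2ennreal (h (lnE (RN_deriv X Y x))) \<partial>Y) = (\<integral>\<^sup>+x. ennreal (k (enn2real (RN_deriv X Y x))) \<partial>X)"
proof -
  have "(\<integral>\<^sup>+x. e2ennreal (h (lnE (RN_deriv X Y x))) \<partial>Y)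
      = (\<integral>\<^sup>+x. RN_deriv X Y x * e2ennreal (h (lnE (RN_deriv X Y x))) \<partial>X)"
    by (subst X.density_RN_deriv[OF ac sets_Y, symmetric]) (rule nn_integral_density; measurable)
  also have "\<dots> = (\<integral>\<^sup>+x. ennreal (k (enn2real (RN_deriv X Y x))) \<partial>X)"
    using X.RN_deriv_finite[OF Y.sigma_finite_measure_axioms ac sets_Y]
    by (intro nn_integral_cong_AE) (auto elim!: eventually_mono simp: assms(1))
  finally show ?thesis .
qed

lemma I_div_eq_nn_integrals:
  "I_div Y X = enn2ereal (\<integral>\<^sup>+x. ennreal (xlnx (enn2real (RN_deriv X Y x))) \<partial>X)
     - enn2ereal (\<integral>\<^sup>+x. ennreal (- xlnx (enn2real (RN_deriv X Y x))) \<partial>X)"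
proof -
  have "(\<integral>\<^sup>+x. e2ennreal (max 0 (lnE (RN_deriv X Y x))) \<partial>Y)
      = (\<integral>\<^sup>+x. ennreal (xlnx (enn2real (RN_deriv X Y x))) \<partial>X)"
    by (rule nn_integral_lnE_RN_deriv[where h = "max 0" and k = xlnx])
      (simp_all add: ennreal_mult_lnE_parts)
  moreover have "(\<integral>\<^sup>+x. e2ennreal (max 0 (- lnE (RN_deriv X Y x))) \<partial>Y)
      = (\<integral>\<^sup>+x. ennreal (- xlnx (enn2real (RN_deriv X Y x))) \<partial>X)"
    by (rule nn_integral_lnE_RN_deriv[where h = "\<lambda>e. max 0 (- e)" and k = "\<lambda>v. - xlnx v"])
      (simp_all add: ennreal_mult_lnE_parts)
  ultimately show ?thesis using ac by (simp add: I_div_def)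
qed

lemma
  shows I_div_finite_iff_integrable: "I_div Y X < \<infinity> \<longleftrightarrow> integrable X (\<lambda>x. xlnx (enn2real (RN_deriv X Y x)))"
    and I_div_eq_integral: "integrable X (\<lambda>x. xlnx (enn2real (RN_deriv X Y x))) \<Longrightarrow>
           I_div Y X = ereal (\<integral>x. xlnx (enn2real (RN_deriv X Y x)) \<partial>X)"
    and I_div_ge_minus_mass: "ereal (- measure X (space X)) \<le> I_div Y X"
proof -
  define u where "u x = xlnx (enn2real (RN_deriv X Y x))" for x
  have [measurable]: "u \<in> borel_measurable X" unfolding u_def by measurable
  define A where "A = (\<integral>\<^sup>+x. ennreal (u x) \<partial>X)"
  define B where "B = (\<integral>\<^sup>+x. ennreal (- u x) \<partial>X)"
  have I: "I_div Y X = enn2ereal A - enn2ereal B"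
    unfolding A_def B_def u_def by (rule I_div_eq_nn_integrals)
  have "B \<le> (\<integral>\<^sup>+x. 1 \<partial>X)"
    unfolding B_def u_def using xlnx_ge_minus_one
    by (intro nn_integral_mono) (simp add: ennreal_le_1)
  then have B_le: "B \<le> ennreal (measure X (space X))"
    by (simp add: X.emeasure_eq_measure)
  then have B_fin: "B \<noteq> \<infinity>" by (auto simp: top_unique)
  have "(\<integral>\<^sup>+x. ennreal (norm (u x)) \<partial>X) = (\<integral>\<^sup>+x. ennreal (u x) + ennreal (- u x) \<partial>X)"
    by (intro nn_integral_cong) (simp add: ennreal_neg abs_real_def)
  also have "\<dots> = A + B" unfolding A_def B_def by (rule nn_integral_add) auto
  finally have integrable_iff: "integrable X u \<longleftrightarrow> A \<noteq> \<infinity>"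
    unfolding integrable_iff_bounded using B_fin by (auto simp: less_top)
  have enn2ereal_fin: "x \<noteq> \<infinity> \<Longrightarrow> enn2ereal x = ereal (enn2real x)" for x
    by (metis enn2ereal_ennreal enn2real_nonneg ennreal_enn2real_if infinity_ennreal_def)
  show "I_div Y X < \<infinity> \<longleftrightarrow> integrable X (\<lambda>x. xlnx (enn2real (RN_deriv X Y x)))"
    using I B_fin integrable_iff unfolding u_def[symmetric] by (auto simp: enn2ereal_fin)
  show "I_div Y X = ereal (\<integral>x. xlnx (enn2real (RN_deriv X Y x)) \<partial>X)"
    if "integrable X (\<lambda>x. xlnx (enn2real (RN_deriv X Y x)))"
    using that I B_fin integrable_iff real_lebesgue_integral_def[of X u]
    unfolding u_def[symmetric] A_def[symmetric] B_def[symmetric] by (simp add: enn2ereal_fin)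
  have "ereal (- measure X (space X)) \<le> 0 - enn2ereal B"
    using B_le B_fin by (simp add: enn2ereal_fin enn2real_leI)
  also have "\<dots> \<le> I_div Y X"
    unfolding I using B_fin by (intro ereal_minus_mono) auto
  finally show "ereal (- measure X (space X)) \<le> I_div Y X" .
qed

lemma
  shows integrable_ln_RN_deriv_iff:
      "integrable Y (\<lambda>x. ln (enn2real (RN_deriv X Y x))) \<longleftrightarrow> integrable X (\<lambda>x. xlnx (enn2real (RN_deriv X Y x)))"
    and integral_ln_RN_deriv:
      "(\<integral>x. ln (enn2real (RN_deriv X Y x)) \<partial>Y) = (\<integral>x. xlnx (enn2real (RN_deriv X Y x)) \<partial>X)"
  using X.RN_deriv_integrable[OF Y.sigma_finite_measure_axioms ac sets_Y]
    X.RN_deriv_integral[OF Y.sigma_finite_measure_axioms ac sets_Y]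
  by (simp_all add: xlnx_def)

lemma I_div_finite_iff_integrable_ln:
  "I_div Y X < \<infinity> \<longleftrightarrow> integrable Y (\<lambda>x. ln (enn2real (RN_deriv X Y x)))"
  unfolding I_div_finite_iff_integrable integrable_ln_RN_deriv_iff ..

lemma I_div_eq_integral_ln:
  "integrable Y (\<lambda>x. ln (enn2real (RN_deriv X Y x))) \<Longrightarrow>
     I_div Y X = ereal (\<integral>x. ln (enn2real (RN_deriv X Y x)) \<partial>Y)"
  by (simp add: I_div_eq_integral integrable_ln_RN_deriv_iff integral_ln_RN_deriv)

end

lemma absolutely_continuous_trans:
  "absolutely_continuous L M \<Longrightarrow> absolutely_continuous M N \<Longrightarrow> absolutely_continuous L N"
  unfolding absolutely_continuous_def by auto

lemma borel_measurable_RN_deriv_sets_eq: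
  "sets M = sets N \<Longrightarrow> RN_deriv M P \<in> borel_measurable N"
  by (metis borel_measurable_RN_deriv measurable_cong_sets)

lemma absolutely_continuous_density:
  assumes sets_N: "sets N = sets M" and ac: "absolutely_continuous M N"
    and [measurable]: "h \<in> borel_measurable M" and nonzero: "AE x in N. h x \<noteq> 0"
  shows "absolutely_continuous (density M h) N"
  unfolding absolutely_continuous_def
proof
  fix A assume "A \<in> null_sets (density M h)"
  then have A: "A \<in> sets M" and vanish: "AE x in M. x \<in> A \<longrightarrow> h x = 0"
    by (auto simp: null_sets_density_iff)
  have "AE x in N. x \<in> A \<longrightarrow> h x = 0" by (rule absolutely_continuous_AE[OF sets_N ac vanish])
  with nonzero have "AE x in N. x \<notin> A" by eventually_elim auto
  then show "A \<in> null_sets N" using A sets_N by (simp add: AE_iff_null_sets)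
qed

lemma AE_RN_deriv_neq_0_top:
  assumes "sigma_finite_measure M" "sigma_finite_measure N"
    and ac: "absolutely_continuous M N" and sets_N: "sets N = sets M"
  shows "AE x in N. RN_deriv M N x \<noteq> 0 \<and> RN_deriv M N x \<noteq> \<infinity>"
proof -
  interpret M: sigma_finite_measure M by fact
  have "AE x in density M (RN_deriv M N). RN_deriv M N x \<noteq> 0"
    by (subst AE_density) auto
  then have "AE x in N. RN_deriv M N x \<noteq> 0"
    unfolding M.density_RN_deriv[OF ac sets_N] .
  moreover have "AE x in N. RN_deriv M N x \<noteq> \<infinity>"
    using absolutely_continuous_AE[OF sets_N ac M.RN_deriv_finite[OF assms(2) ac sets_N]] .
  ultimately show ?thesis by eventually_elim auto
qed

lemma AE_ln_RN_deriv_quotient: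
  assumes M: "sigma_finite_measure M" and X: "sigma_finite_measure X" and N: "sigma_finite_measure N"
    and sets_X: "sets X = sets M" and sets_N: "sets N = sets M"
    and ac_X: "absolutely_continuous M X" and ac_N: "absolutely_continuous M N"
    and ac_XN: "absolutely_continuous X N"
  shows "AE x in N. 0 < enn2real (RN_deriv M X x) \<and> 0 < enn2real (RN_deriv M N x) \<and>
     ln (enn2real (RN_deriv X N x)) = ln (enn2real (RN_deriv M N x)) - ln (enn2real (RN_deriv M X x))"
proof -
  interpret M: sigma_finite_measure M by fact
  interpret X: sigma_finite_measure X by fact
  have sets_NX: "sets N = sets X" using sets_X sets_N by simp
  have [measurable]: "RN_deriv X N \<in> borel_measurable M"
    using sets_X by (rule borel_measurable_RN_deriv_sets_eq)
  have "density M (\<lambda>x. RN_deriv M X x * RN_deriv X N x) = density (density M (RN_deriv M X)) (RN_deriv X N)"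
    by (simp add: density_density_eq)
  also have "\<dots> = density X (RN_deriv X N)" by (simp add: M.density_RN_deriv[OF ac_X sets_X])
  also have "\<dots> = N" by (rule X.density_RN_deriv[OF ac_XN sets_NX])
  finally have "AE x in M. RN_deriv M X x * RN_deriv X N x = RN_deriv M N x"
    by (intro M.RN_deriv_unique) auto
  then have chain: "AE x in N. RN_deriv M X x * RN_deriv X N x = RN_deriv M N x"
    by (rule absolutely_continuous_AE[OF sets_N ac_N])
  show ?thesis
    using chain AE_RN_deriv_neq_0_top[OF M N ac_N sets_N] AE_RN_deriv_neq_0_top[OF X N ac_XN sets_NX]
  proof eventually_elim
    case (elim x)
    then have "RN_deriv M X x \<noteq> 0" "RN_deriv M X x \<noteq> \<infinity>"
      by (auto simp: ennreal_mult_eq_top_iff)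
    then have "0 < enn2real (RN_deriv M X x)" "0 < enn2real (RN_deriv X N x)" "0 < enn2real (RN_deriv M N x)"
      using elim by (auto simp: enn2real_positive_iff top.not_eq_extremum zero_less_iff_neq_zero)
    moreover have "enn2real (RN_deriv M N x) = enn2real (RN_deriv M X x) * enn2real (RN_deriv X N x)"
      using elim by (simp flip: enn2real_mult)
    ultimately show ?case by (simp add: ln_mult)
  qed
qed

lemma mix_eq_density:
  assumes "sigma_finite_measure M" and sets_P: "sets P = sets M" and sets_R: "sets R = sets M"
    and ac_P: "absolutely_continuous M P" and ac_R: "absolutely_continuous M R"
  shows "mix l P R = density M (\<lambda>x. ennreal l * RN_deriv M P x + ennreal (1 - l) * RN_deriv M R x)"
    (is "_ = density M ?w")
proof -
  interpret M: sigma_finite_measure M by fact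
  have "density M ?w = measure_of (space M) (sets M) (emeasure (density M ?w))"
    by (metis measure_of_of_measure sets_density space_density)
  also have "\<dots> = measure_of (space M) (sets M) (\<lambda>A. ennreal l * emeasure P A + ennreal (1 - l) * emeasure R A)"
  proof (rule measure_of_eq)
    show "sets M \<subseteq> Pow (space M)" using sets.sets_into_space by auto
    fix A assume "A \<in> sigma_sets (space M) (sets M)"
    then have [measurable]: "A \<in> sets M" by (simp add: sets.sigma_sets_eq)
    have "emeasure (density M ?w) A
        = (\<integral>\<^sup>+x. ennreal l * (RN_deriv M P x * indicator A x) + ennreal (1 - l) * (RN_deriv M R x * indicator A x) \<partial>M)"
      by (simp add: emeasure_density distrib_right mult.assoc)
    also have "\<dots> = ennreal l * emeasure (density M (RN_deriv M P)) A + ennreal (1 - l) * emeasure (density M (RN_deriv M R)) A"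
      by (simp add: nn_integral_add nn_integral_cmult emeasure_density)
    finally show "emeasure (density M ?w) A = ennreal l * emeasure P A + ennreal (1 - l) * emeasure R A"
      by (simp add: M.density_RN_deriv[OF ac_P sets_P] M.density_RN_deriv[OF ac_R sets_R])
  qed
  also have "\<dots> = mix l P R"
    unfolding mix_def sets_P sets_eq_imp_space_eq[OF sets_P] ..
  finally show ?thesis ..
qed

lemma nn_integral_liminf_le_of_nonneg_integrals:
  assumes int_D: "integrable M D" and int_Dk: "\<And>k. integrable M (Dk k)"
    and le: "\<And>k x. Dk k x \<le> D x" and nonneg: "\<And>k. 0 \<le> (\<integral>x. Dk k x \<partial>M)"
  shows "(\<integral>\<^sup>+x. liminf (\<lambda>k. ennreal (D x - Dk k x)) \<partial>M) \<le> ennreal (\<integral>x. D x \<partial>M)"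
proof -
  have [measurable]: "D \<in> borel_measurable M" "\<And>k. Dk k \<in> borel_measurable M"
    using int_D int_Dk by auto
  have "(\<integral>\<^sup>+x. ennreal (D x - Dk k x) \<partial>M) = ennreal ((\<integral>x. D x \<partial>M) - (\<integral>x. Dk k x \<partial>M))" for k
    using int_D int_Dk le by (subst nn_integral_eq_integral) auto
  also have "\<dots> k \<le> ennreal (\<integral>x. D x \<partial>M)" for k
    by (intro ennreal_leI) (simp add: nonneg)
  finally have "liminf (\<lambda>k. \<integral>\<^sup>+x. ennreal (D x - Dk k x) \<partial>M) \<le> ennreal (\<integral>x. D x \<partial>M)"
    by (intro Liminf_le) auto
  moreover have "(\<integral>\<^sup>+x. liminf (\<lambda>k. ennreal (D x - Dk k x)) \<partial>M)
      \<le> liminf (\<lambda>k. \<integral>\<^sup>+x. ennreal (D x - Dk k x) \<partial>M)"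
    by (rule nn_integral_liminf) measurable
  ultimately show ?thesis by order
qed

(* At f = 0 < g the true slope 1 + ln f is -oo, which the junk value ln 0 = 0 would hide. *)
definition bregman_xlnx :: "real \<Rightarrow> real \<Rightarrow> ennreal" where
  "bregman_xlnx f g =
     (if f = 0 \<and> 0 < g then \<infinity> else ennreal (xlnx g - xlnx f - (g - f) * (1 + ln f)))"

lemma xlnx_difference_quotient_le_tangent:
  assumes f: "0 \<le> f" and g: "0 \<le> g" and a: "0 < a" "a < 1"
  shows "(xlnx ((1 - a) * f + a * g) - xlnx f) / a \<le> (g - f) * (1 + ln ((1 - a) * f + a * g))"
proof (cases "(1 - a) * f + a * g = 0")
  case True
  with f g a have "f = 0" "g = 0" by (smt (verit) mult_nonneg_nonneg mult_pos_pos)+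
  then show ?thesis by (simp add: xlnx_def)
next
  case False
  define m where "m = (1 - a) * f + a * g"
  have "0 < m" using False f g a unfolding m_def by (smt (verit) mult_nonneg_nonneg)
  from xlnx_ge_tangent[OF f this] have "xlnx m - xlnx f \<le> a * ((g - f) * (1 + ln m))"
    by (simp add: m_def algebra_simps)
  then show ?thesis using a unfolding m_def[symmetric] by (simp add: divide_le_eq mult.commute)
qed

lemma xlnx_difference_quotient_le_diff:
  assumes "0 \<le> f" "0 \<le> g" "0 < a" "a \<le> 1"
  shows "(xlnx ((1 - a) * f + a * g) - xlnx f) / a \<le> xlnx g - xlnx f"
proof -
  have "xlnx ((1 - a) * f + (1 - (1 - a)) * g) \<le> (1 - a) * xlnx f + (1 - (1 - a)) * xlnx g"
    using assms by (intro xlnx_convex) auto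
  then have "xlnx ((1 - a) * f + a * g) - xlnx f \<le> a * (xlnx g - xlnx f)"
    by (simp add: algebra_simps)
  then show ?thesis using assms by (simp add: divide_le_eq mult.commute)
qed

lemma bregman_xlnx_le_liminf:
  fixes f g :: real and a :: "nat \<Rightarrow> real"
  assumes f: "0 \<le> f" and g: "0 \<le> g" and a: "a \<longlonglongrightarrow> 0" "\<And>k. 0 < a k" "\<And>k. a k < 1"
  shows "bregman_xlnx f g
    \<le> liminf (\<lambda>k. ennreal (xlnx g - xlnx f - (xlnx ((1 - a k) * f + a k * g) - xlnx f) / a k))"
proof -
  define G where "G k = xlnx g - xlnx f - (g - f) * (1 + ln ((1 - a k) * f + a k * g))" for k
  have "liminf (\<lambda>k. ennreal (G k))
      \<le> liminf (\<lambda>k. ennreal (xlnx g - xlnx f - (xlnx ((1 - a k) * f + a k * g) - xlnx f) / a k))"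
    unfolding G_def using xlnx_difference_quotient_le_tangent[OF f g a(2,3)]
    by (intro Liminf_mono always_eventually allI ennreal_leI) (simp add: algebra_simps)
  moreover have "bregman_xlnx f g \<le> liminf (\<lambda>k. ennreal (G k))"
  proof (cases "0 < f")
    case True
    have "(\<lambda>k. (1 - a k) * f + a k * g) \<longlonglongrightarrow> (1 - 0) * f + 0 * g" by (intro tendsto_intros a(1))
    then have "G \<longlonglongrightarrow> xlnx g - xlnx f - (g - f) * (1 + ln f)"
      unfolding G_def using True by (intro tendsto_intros) auto
    then have "(\<lambda>k. ennreal (G k)) \<longlonglongrightarrow> bregman_xlnx f g"
      using True by (simp add: bregman_xlnx_def tendsto_ennrealI)
    then show ?thesis by (simp add: lim_imp_Liminf)
  next
    case False
    with f have "f = 0" by simp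
    show ?thesis
    proof (cases "g = 0")
      case False
      with g have "0 < g" by simp
      have "filterlim (\<lambda>k. ln (a k)) at_bot sequentially"
        using a(1,2) by (intro filterlim_compose[OF ln_at_0] tendsto_imp_filterlim_at_right) auto
      then have "filterlim (\<lambda>k. - g + g * - ln (a k)) at_top sequentially"
        using \<open>0 < g\<close> by (intro filterlim_tendsto_add_at_top filterlim_tendsto_pos_mult_at_top)
          (auto simp: filterlim_uminus_at_bot)
      moreover have "G k = - g + g * - ln (a k)" for k
        using \<open>f = 0\<close> \<open>0 < g\<close> a(2)[of k] by (simp add: G_def xlnx_def ln_mult algebra_simps)
      ultimately have "(\<lambda>k. ennreal (G k)) \<longlonglongrightarrow> \<infinity>"
        by (simp add: ennreal_tendsto_top_eq_at_top)
      then show ?thesis by (simp add: lim_imp_Liminf)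
    qed (simp add: bregman_xlnx_def \<open>f = 0\<close> G_def xlnx_def)
  qed
  ultimately show ?thesis by order
qed

lemma bregman_xlnx_eq:
  assumes "0 \<le> f" "0 \<le> g" "f = 0 \<longrightarrow> g = 0"
  shows "bregman_xlnx f g = ennreal (xlnx g - xlnx f - (g - f) * (1 + ln f))"
    and "0 \<le> xlnx g - xlnx f - (g - f) * (1 + ln f)"
proof -
  have "0 \<le> xlnx g - xlnx f - (g - f) * (1 + ln f)"
  proof (cases "f = 0")
    case False
    with assms(1) have "0 < f" by simp
    with xlnx_ge_tangent[OF assms(2) this] show ?thesis by simp
  qed (use assms in \<open>simp add: xlnx_def\<close>)
  then show "0 \<le> xlnx g - xlnx f - (g - f) * (1 + ln f)"
    and "bregman_xlnx f g = ennreal (xlnx g - xlnx f - (g - f) * (1 + ln f))"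
    using assms by (auto simp: bregman_xlnx_def)
qed

lemma nn_integral_bregman_xlnx_le:
  fixes f g :: "'a \<Rightarrow> real"
  assumes "finite_measure M"
    and [measurable]: "f \<in> borel_measurable M" "g \<in> borel_measurable M"
    and f_nonneg: "\<And>x. 0 \<le> f x" and g_nonneg: "\<And>x. 0 \<le> g x"
    and int_xlnx_f: "integrable M (\<lambda>x. xlnx (f x))" and int_xlnx_g: "integrable M (\<lambda>x. xlnx (g x))"
    and minimal: "\<And>a. 0 < a \<Longrightarrow> a < 1 \<Longrightarrow>
        (\<integral>x. xlnx (f x) \<partial>M) \<le> (\<integral>x. xlnx ((1 - a) * f x + a * g x) \<partial>M)"
  shows "(\<integral>\<^sup>+x. bregman_xlnx (f x) (g x) \<partial>M) \<le> ennreal (\<integral>x. xlnx (g x) - xlnx (f x) \<partial>M)"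
    and "0 \<le> (\<integral>x. xlnx (g x) - xlnx (f x) \<partial>M)"
proof -
  define a where "a k = 1 / real (k + 2)" for k
  have a: "a \<longlonglongrightarrow> 0" "\<And>k. 0 < a k" "\<And>k. a k < 1"
    unfolding a_def using LIMSEQ_ignore_initial_segment[OF lim_inverse_n', of 2] by auto
  define Dk where "Dk k x = (xlnx ((1 - a k) * f x + a k * g x) - xlnx (f x)) / a k" for k x
  have int_mix: "integrable M (\<lambda>x. xlnx ((1 - a k) * f x + a k * g x))" for k
    using a(2,3)[of k] by (intro xlnx_mix_integrable) (auto simp: assms less_imp_le)
  have int_D: "integrable M (\<lambda>x. xlnx (g x) - xlnx (f x))" using int_xlnx_f int_xlnx_g by auto
  have int_Dk: "integrable M (Dk k)" for k unfolding Dk_def using int_mix int_xlnx_f by auto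
  have Dk_le: "Dk k x \<le> xlnx (g x) - xlnx (f x)" for k x
    unfolding Dk_def using a(2,3)[of k] f_nonneg g_nonneg
    by (intro xlnx_difference_quotient_le_diff) (auto simp: less_imp_le)
  have Dk_nonneg: "0 \<le> (\<integral>x. Dk k x \<partial>M)" for k
    using minimal[OF a(2,3)] int_mix int_xlnx_f a(2)[of k] by (simp add: Dk_def)
  show "0 \<le> (\<integral>x. xlnx (g x) - xlnx (f x) \<partial>M)"
    using Dk_nonneg[of 0] integral_mono[OF int_Dk int_D Dk_le, of 0] by (rule order.trans)
  have "(\<integral>\<^sup>+x. bregman_xlnx (f x) (g x) \<partial>M)
      \<le> (\<integral>\<^sup>+x. liminf (\<lambda>k. ennreal (xlnx (g x) - xlnx (f x) - Dk k x)) \<partial>M)"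
    unfolding Dk_def using f_nonneg g_nonneg a by (intro nn_integral_mono bregman_xlnx_le_liminf)
  also have "\<dots> \<le> ennreal (\<integral>x. xlnx (g x) - xlnx (f x) \<partial>M)"
    by (rule nn_integral_liminf_le_of_nonneg_integrals[OF int_D int_Dk Dk_le Dk_nonneg])
  finally show "(\<integral>\<^sup>+x. bregman_xlnx (f x) (g x) \<partial>M) \<le> ennreal (\<integral>x. xlnx (g x) - xlnx (f x) \<partial>M)" .
qed

lemma
  fixes f g :: "'a \<Rightarrow> real"
  assumes "finite_measure M"
    and [measurable]: "f \<in> borel_measurable M" "g \<in> borel_measurable M"
    and f_nonneg: "\<And>x. 0 \<le> f x" and g_nonneg: "\<And>x. 0 \<le> g x"
    and int_f: "integrable M f" and int_g: "integrable M g"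
    and same_mass: "(\<integral>x. f x \<partial>M) = (\<integral>x. g x \<partial>M)"
    and int_xlnx_f: "integrable M (\<lambda>x. xlnx (f x))" and int_xlnx_g: "integrable M (\<lambda>x. xlnx (g x))"
    and minimal: "\<And>a. 0 < a \<Longrightarrow> a < 1 \<Longrightarrow>
        (\<integral>x. xlnx (f x) \<partial>M) \<le> (\<integral>x. xlnx ((1 - a) * f x + a * g x) \<partial>M)"
  shows segment_minimizer_xlnx_support: "AE x in M. f x = 0 \<longrightarrow> g x = 0"
    and segment_minimizer_xlnx_integrable: "integrable M (\<lambda>x. g x * ln (f x))"
    and segment_minimizer_xlnx_le: "(\<integral>x. xlnx (f x) \<partial>M) \<le> (\<integral>x. g x * ln (f x) \<partial>M)"
proof -
  interpret finite_measure M by fact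
  define D where "D x = xlnx (g x) - xlnx (f x)" for x
  have int_D: "integrable M D" unfolding D_def using int_xlnx_f int_xlnx_g by auto
  have bregman_le: "(\<integral>\<^sup>+x. bregman_xlnx (f x) (g x) \<partial>M) \<le> ennreal (\<integral>x. D x \<partial>M)"
    and "0 \<le> (\<integral>x. D x \<partial>M)"
    unfolding D_def by (rule nn_integral_bregman_xlnx_le; use assms in auto)+
  have [measurable]: "(\<lambda>x. bregman_xlnx (f x) (g x)) \<in> borel_measurable M"
    unfolding bregman_xlnx_def by measurable
  have "AE x in M. bregman_xlnx (f x) (g x) \<noteq> \<infinity>"
    using bregman_le by (intro nn_integral_noteq_infinite) (auto simp: top_unique)
  then show support: "AE x in M. f x = 0 \<longrightarrow> g x = 0"
    by eventually_elim (use g_nonneg in \<open>auto simp: bregman_xlnx_def less_le split: if_splits\<close>)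
  \<comment> \<open>Since \<open>f\<close> and \<open>g\<close> have the same mass, \<open>\<integral>T = \<integral>g ln f - \<integral>f ln f\<close>.\<close>
  define T where "T x = (g x - f x) * (1 + ln (f x))" for x
  have bregman_eq: "AE x in M. bregman_xlnx (f x) (g x) = ennreal (D x - T x) \<and> 0 \<le> D x - T x"
    using support by eventually_elim (use bregman_xlnx_eq f_nonneg g_nonneg in \<open>simp add: D_def T_def\<close>)
  then have nn_le: "(\<integral>\<^sup>+x. ennreal (D x - T x) \<partial>M) \<le> ennreal (\<integral>x. D x \<partial>M)"
    using bregman_le by (subst nn_integral_cong_AE[where v = "\<lambda>x. bregman_xlnx (f x) (g x)"]) auto
  have int_DT: "integrable M (\<lambda>x. D x - T x)"
    using nn_le bregman_eq unfolding T_def D_def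
    by (intro integrableI_nonneg) (auto simp: top_unique less_top[symmetric] elim: eventually_mono)
  have "ennreal (\<integral>x. D x - T x \<partial>M) \<le> ennreal (\<integral>x. D x \<partial>M)"
    using nn_le int_DT bregman_eq by (subst nn_integral_eq_integral[symmetric]) (auto elim: eventually_mono)
  moreover have "0 \<le> (\<integral>x. D x - T x \<partial>M)"
    using bregman_eq by (intro integral_nonneg_AE) (auto elim: eventually_mono)
  ultimately have "0 \<le> (\<integral>x. T x \<partial>M)" and int_T: "integrable M T"
    using \<open>0 \<le> (\<integral>x. D x \<partial>M)\<close> int_D int_DT Bochner_Integration.integrable_diff[OF int_D int_DT]
    by auto
  have g_ln_f: "g x * ln (f x) = T x + xlnx (f x) - g x + f x" for x
    by (simp add: T_def xlnx_def algebra_simps)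
  show "integrable M (\<lambda>x. g x * ln (f x))"
    unfolding g_ln_f using int_T int_xlnx_f int_f int_g by auto
  show "(\<integral>x. xlnx (f x) \<partial>M) \<le> (\<integral>x. g x * ln (f x) \<partial>M)"
    unfolding g_ln_f using int_T int_xlnx_f int_f int_g same_mass \<open>0 \<le> (\<integral>x. T x \<partial>M)\<close> by simp
qed

lemma I_div_density_eq_integral:
  assumes "finite_measure M" and [measurable]: "h \<in> borel_measurable M" and nonneg: "\<And>x. 0 \<le> h x"
    and prob: "prob_space (density M h)" and int: "integrable M (\<lambda>x. xlnx (h x))"
  shows "I_div (density M h) M = ereal (\<integral>x. xlnx (h x) \<partial>M)"
proof -
  interpret finite_measure M by fact
  have "AE x in M. ennreal (h x) = RN_deriv M (density M h) x"
    by (rule RN_deriv_unique) auto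
  then have "AE x in M. enn2real (RN_deriv M (density M h) x) = h x"
    by eventually_elim (metis enn2real_ennreal nonneg)
  then have "AE x in M. xlnx (h x) = xlnx (enn2real (RN_deriv M (density M h) x))"
    by eventually_elim simp
  then have "integrable M (\<lambda>x. xlnx (enn2real (RN_deriv M (density M h) x))) \<and>
      (\<integral>x. xlnx (enn2real (RN_deriv M (density M h) x)) \<partial>M) = (\<integral>x. xlnx (h x) \<partial>M)"
    using int by (auto intro: integral_cong_AE integrable_cong_AE_imp)
  moreover have "absolutely_continuous M (density M h)"
    by (rule absolutely_continuousI_density) measurable
  ultimately show ?thesis
    using I_div_eq_integral[OF \<open>finite_measure M\<close> prob] by simp
qed

lemma absolutely_continuous_RN_derivI:
  assumes "sigma_finite_measure M" "sigma_finite_measure N" "sigma_finite_measure P"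
    and sets_N: "sets N = sets M" and sets_P: "sets P = sets M"
    and ac_N: "absolutely_continuous M N" and ac_P: "absolutely_continuous M P"
    and vanish: "AE x in M. RN_deriv M P x = 0 \<longrightarrow> RN_deriv M N x = 0"
  shows "absolutely_continuous P N"
  unfolding absolutely_continuous_def
proof
  interpret M: sigma_finite_measure M by fact
  fix A assume "A \<in> null_sets P"
  then have "A \<in> null_sets (density M (RN_deriv M P))"
    by (simp add: M.density_RN_deriv[OF ac_P sets_P])
  then have A: "A \<in> sets M" and "AE x in M. x \<in> A \<longrightarrow> RN_deriv M P x = 0"
    by (auto simp: null_sets_density_iff)
  with vanish have "AE x in M. x \<in> A \<longrightarrow> RN_deriv M N x = 0" by eventually_elim auto
  with A have "A \<in> null_sets (density M (RN_deriv M N))" by (simp add: null_sets_density_iff)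
  then show "A \<in> null_sets N" by (simp add: M.density_RN_deriv[OF ac_N sets_N])
qed

context
  fixes S P V :: "'a measure" and C :: "'a measure set"
  assumes S: "finite_measure S" and C_prob: "C \<subseteq> {R. prob_on S R}" and convex: "convex_meas_set C"
    and proj: "is_I_proj C S P" and V_in_C: "V \<in> C" and I_div_V_S: "I_div V S < \<infinity>"
begin

interpretation S: finite_measure S by (fact S)

lemma I_projection_measures:
  shows "prob_space P" "sets P = sets S" "absolutely_continuous S P"
    and "prob_space V" "sets V = sets S" "absolutely_continuous S V"
  using proj V_in_C C_prob I_div_V_S
  by (auto simp: is_I_proj_def prob_on_def I_div_def split: if_splits)

lemma I_projection_integrable_xlnx:
  shows "integrable S (\<lambda>x. xlnx (enn2real (RN_deriv S P x)))"
    and "integrable S (\<lambda>x. xlnx (enn2real (RN_deriv S V x)))"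
  using I_div_finite_iff_integrable[OF S I_projection_measures(1-3)]
    I_div_finite_iff_integrable[OF S I_projection_measures(4-6)] proj I_div_V_S
  by (auto simp: is_I_proj_def)

lemma I_projection_minimal_on_segment:
  assumes a: "0 < a" "a < 1"
  shows "(\<integral>x. xlnx (enn2real (RN_deriv S P x)) \<partial>S)
    \<le> (\<integral>x. xlnx ((1 - a) * enn2real (RN_deriv S P x) + a * enn2real (RN_deriv S V x)) \<partial>S)"
proof -
  interpret P: prob_space P by (rule I_projection_measures)
  interpret V: prob_space V by (rule I_projection_measures)
  define w where "w x = (1 - a) * enn2real (RN_deriv S P x) + a * enn2real (RN_deriv S V x)" for x
  have [measurable]: "w \<in> borel_measurable S" unfolding w_def by measurable
  have "mix (1 - a) P V \<in> C"
    using convex proj V_in_C a unfolding convex_meas_set_def is_I_proj_def by auto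
  moreover have "mix (1 - a) P V = density S w"
  proof -
    have "mix (1 - a) P V
        = density S (\<lambda>x. ennreal (1 - a) * RN_deriv S P x + ennreal (1 - (1 - a)) * RN_deriv S V x)"
      using I_projection_measures by (intro mix_eq_density) (auto intro: S.sigma_finite_measure_axioms)
    also have "\<dots> = density S w"
    proof (rule density_cong)
      show "AE x in S. ennreal (1 - a) * RN_deriv S P x + ennreal (1 - (1 - a)) * RN_deriv S V x = w x"
        using S.RN_deriv_finite[OF P.sigma_finite_measure_axioms I_projection_measures(3,2)]
          S.RN_deriv_finite[OF V.sigma_finite_measure_axioms I_projection_measures(6,5)]
        by eventually_elim
          (use a in \<open>simp add: w_def ennreal_mult ennreal_enn2real_if ennreal_plus[symmetric]\<close>)
    qed measurable
    finally show ?thesis .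
  qed
  ultimately have le: "I_div P S \<le> I_div (density S w) S" and prob: "prob_space (density S w)"
    using proj C_prob by (auto simp: is_I_proj_def prob_on_def intro: INF_lower)
  have "integrable S (\<lambda>x. xlnx (w x))"
    unfolding w_def using a I_projection_integrable_xlnx
    by (intro xlnx_mix_integrable S) auto
  moreover have "0 \<le> w x" for x using a by (simp add: w_def)
  ultimately have "I_div (density S w) S = ereal (\<integral>x. xlnx (w x) \<partial>S)"
    using I_div_density_eq_integral[OF S _ _ prob] by simp
  moreover have "I_div P S = ereal (\<integral>x. xlnx (enn2real (RN_deriv S P x)) \<partial>S)"
    by (rule I_div_eq_integral[OF S I_projection_measures(1-3) I_projection_integrable_xlnx(1)])
  ultimately show ?thesis using le by (simp add: w_def)
qed

lemma
  shows I_projection_support: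
      "AE x in S. enn2real (RN_deriv S P x) = 0 \<longrightarrow> enn2real (RN_deriv S V x) = 0"
    and I_projection_integrable_cross:
      "integrable S (\<lambda>x. enn2real (RN_deriv S V x) * ln (enn2real (RN_deriv S P x)))"
    and I_projection_integral_cross_ge:
      "(\<integral>x. xlnx (enn2real (RN_deriv S P x)) \<partial>S)
        \<le> (\<integral>x. enn2real (RN_deriv S V x) * ln (enn2real (RN_deriv S P x)) \<partial>S)"
proof -
  note P = I_projection_measures(1-3) and V = I_projection_measures(4-6)
  interpret P: prob_space P by (fact P(1))
  interpret V: prob_space V by (fact V(1))
  define f where "f x = enn2real (RN_deriv S P x)" for x
  define g where "g x = enn2real (RN_deriv S V x)" for x
  have [measurable]: "f \<in> borel_measurable S" "g \<in> borel_measurable S"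
    unfolding f_def g_def by measurable
  have mass: "integrable S f" "(\<integral>x. f x \<partial>S) = 1" "integrable S g" "(\<integral>x. g x \<partial>S) = 1"
    using S.RN_deriv_integrable[OF P.sigma_finite_measure_axioms P(3,2), of "\<lambda>_. 1"]
      S.RN_deriv_integral[OF P.sigma_finite_measure_axioms P(3,2), of "\<lambda>_. 1"]
      S.RN_deriv_integrable[OF V.sigma_finite_measure_axioms V(3,2), of "\<lambda>_. 1"]
      S.RN_deriv_integral[OF V.sigma_finite_measure_axioms V(3,2), of "\<lambda>_. 1"]
    by (simp_all add: f_def[abs_def] g_def[abs_def] P.prob_space V.prob_space)
  have nonneg: "0 \<le> f x" "0 \<le> g x" for x by (simp_all add: f_def g_def)
  note minimizer = S _ _ nonneg(1) nonneg(2) mass(1,3) mass(2)[folded mass(4)]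
    I_projection_integrable_xlnx[folded f_def g_def] I_projection_minimal_on_segment[folded f_def g_def]
  show "AE x in S. enn2real (RN_deriv S P x) = 0 \<longrightarrow> enn2real (RN_deriv S V x) = 0"
    and "integrable S (\<lambda>x. enn2real (RN_deriv S V x) * ln (enn2real (RN_deriv S P x)))"
    and "(\<integral>x. xlnx (enn2real (RN_deriv S P x)) \<partial>S)
        \<le> (\<integral>x. enn2real (RN_deriv S V x) * ln (enn2real (RN_deriv S P x)) \<partial>S)"
    using segment_minimizer_xlnx_support[OF minimizer] segment_minimizer_xlnx_integrable[OF minimizer]
      segment_minimizer_xlnx_le[OF minimizer]
    by (simp_all add: f_def g_def)
qed

lemma absolutely_continuous_I_projection: "absolutely_continuous P V"
proof -
  note P = I_projection_measures(1-3) and V = I_projection_measures(4-6)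
  interpret P: prob_space P by (fact P(1))
  interpret V: prob_space V by (fact V(1))
  have "AE x in S. RN_deriv S P x = 0 \<longrightarrow> RN_deriv S V x = 0"
    using I_projection_support S.RN_deriv_finite[OF V.sigma_finite_measure_axioms V(3,2)]
    by eventually_elim (auto simp: enn2real_eq_0_iff)
  then show ?thesis
    by (rule absolutely_continuous_RN_derivI[OF S.sigma_finite_measure_axioms V.sigma_finite_measure_axioms
          P.sigma_finite_measure_axioms V(2) P(2) V(3) P(3)])
qed

lemma I_div_to_I_projection_eq:
  "I_div V P = ereal ((\<integral>x. xlnx (enn2real (RN_deriv S V x)) \<partial>S)
     - (\<integral>x. enn2real (RN_deriv S V x) * ln (enn2real (RN_deriv S P x)) \<partial>S))"
proof -
  note P = I_projection_measures(1-3) and V = I_projection_measures(4-6)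
  interpret P: prob_space P by (fact P(1))
  interpret V: prob_space V by (fact V(1))
  define f where "f x = enn2real (RN_deriv S P x)" for x
  define g where "g x = enn2real (RN_deriv S V x)" for x
  have [measurable]: "f \<in> borel_measurable S" "g \<in> borel_measurable S"
    unfolding f_def g_def by measurable
  have ln_quotient: "AE x in V. ln (enn2real (RN_deriv P V x)) = ln (g x) - ln (f x)"
    using AE_ln_RN_deriv_quotient[OF S.sigma_finite_measure_axioms P.sigma_finite_measure_axioms
        V.sigma_finite_measure_axioms P(2) V(2) P(3) V(3) absolutely_continuous_I_projection]
    by eventually_elim (simp add: f_def g_def)
  have g_ln_quotient: "g x * (ln (g x) - ln (f x)) = xlnx (g x) - g x * ln (f x)" for x
    by (simp add: xlnx_def algebra_simps)
  note integrable = I_projection_integrable_xlnx(2) I_projection_integrable_cross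
  have int_quotient: "integrable V (\<lambda>x. ln (g x) - ln (f x))"
    using S.RN_deriv_integrable[OF V.sigma_finite_measure_axioms V(3,2), of "\<lambda>x. ln (g x) - ln (f x)"]
      integrable by (simp add: g_def[symmetric] f_def[symmetric] g_ln_quotient)
  have "(\<integral>x. ln (g x) - ln (f x) \<partial>V) = (\<integral>x. xlnx (g x) \<partial>S) - (\<integral>x. g x * ln (f x) \<partial>S)"
    using S.RN_deriv_integral[OF V.sigma_finite_measure_axioms V(3,2), of "\<lambda>x. ln (g x) - ln (f x)"]
      integrable by (simp add: g_def[symmetric] f_def[symmetric] g_ln_quotient)
  moreover have [measurable]: "(\<lambda>x. ln (enn2real (RN_deriv P V x))) \<in> borel_measurable V"
    using borel_measurable_RN_deriv_sets_eq[of P V] P(2) V(2) by simp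
  then have "(\<integral>x. ln (enn2real (RN_deriv P V x)) \<partial>V) = (\<integral>x. ln (g x) - ln (f x) \<partial>V)"
    by (rule integral_cong_AE[OF _ borel_measurable_integrable[OF int_quotient] ln_quotient])
  moreover have "integrable V (\<lambda>x. ln (enn2real (RN_deriv P V x)))"
    using int_quotient by (rule integrable_cong_AE_imp) (use ln_quotient in \<open>auto elim: eventually_mono\<close>)
  ultimately show ?thesis
    using I_div_eq_integral_ln[OF P.finite_measure_axioms V(1) _ absolutely_continuous_I_projection] P(2) V(2)
    by (simp add: f_def g_def)
qed

lemma
  shows I_div_to_I_projection_finite: "I_div V P < \<infinity>"
    and I_projection_pythagorean: "I_div V P + I_div P S \<le> I_div V S"
proof -
  show "I_div V P < \<infinity>" by (simp add: I_div_to_I_projection_eq)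
  have "I_div P S = ereal (\<integral>x. xlnx (enn2real (RN_deriv S P x)) \<partial>S)"
    and "I_div V S = ereal (\<integral>x. xlnx (enn2real (RN_deriv S V x)) \<partial>S)"
    using I_div_eq_integral[OF S I_projection_measures(1-3)] I_div_eq_integral[OF S I_projection_measures(4-6)]
      I_projection_integrable_xlnx by simp_all
  then show "I_div V P + I_div P S \<le> I_div V S"
    using I_div_to_I_projection_eq I_projection_integral_cross_ge by simp
qed

end

locale I_div_reference =
  fixes Q V :: "'a measure"
  assumes prob_Q: "prob_space Q" and prob_V: "prob_space V" and sets_V: "sets V = sets Q"
    and I_div_V_Q: "I_div V Q < \<infinity>"
begin

interpretation Q: prob_space Q by (fact prob_Q)
interpretation V: prob_space V by (fact prob_V)

definition admissible :: "'a measure \<Rightarrow> bool" where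
  "admissible X \<longleftrightarrow> finite_measure X \<and> sets X = sets Q \<and> absolutely_continuous Q X \<and> I_div V X < \<infinity>"

definition I_V :: "'a measure \<Rightarrow> real" where
  "I_V X = (\<integral>x. ln (enn2real (RN_deriv X V x)) \<partial>V)"

lemma admissible_Q: "admissible Q"
  using I_div_V_Q Q.finite_measure_axioms by (simp add: admissible_def absolutely_continuous_def)

lemma absolutely_continuous_V:
  "admissible X \<Longrightarrow> absolutely_continuous X V"
  by (auto simp: admissible_def I_div_def split: if_splits)

lemma integrable_ln_RN_deriv_V:
  "admissible X \<Longrightarrow> integrable V (\<lambda>x. ln (enn2real (RN_deriv X V x)))"
  using I_div_finite_iff_integrable_ln[OF _ prob_V _ absolutely_continuous_V] sets_V
  by (auto simp: admissible_def)

lemma I_div_eq_I_V: "admissible X \<Longrightarrow> I_div V X = ereal (I_V X)"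
  using I_div_eq_integral_ln[OF _ prob_V _ absolutely_continuous_V integrable_ln_RN_deriv_V] sets_V
  by (auto simp: admissible_def I_V_def)

lemma I_V_ge_minus_mass: "admissible X \<Longrightarrow> - measure X (space X) \<le> I_V X"
  using I_div_ge_minus_mass[OF _ prob_V _ absolutely_continuous_V, of X] sets_V I_div_eq_I_V[of X]
  by (auto simp: admissible_def)

lemma admissibleI_integrable:
  assumes "finite_measure X" "sets X = sets Q" "absolutely_continuous Q X" "absolutely_continuous X V"
    and "integrable V (\<lambda>x. ln (enn2real (RN_deriv X V x)))"
  shows "admissible X"
  using assms I_div_finite_iff_integrable_ln[OF assms(1) prob_V] sets_V by (simp add: admissible_def)

lemma
  assumes "admissible X"
  shows admissible_sigma_finite: "sigma_finite_measure X"
    and admissible_sets: "sets X = sets Q"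
    and admissible_absolutely_continuous: "absolutely_continuous Q X"
  using assms by (auto simp: admissible_def intro: finite_measure.axioms(1))

lemma AE_ln_RN_deriv_V:
  assumes "sigma_finite_measure X" "sets X = sets Q" "absolutely_continuous Q X" "absolutely_continuous X V"
  shows "AE x in V. 0 < enn2real (RN_deriv Q X x) \<and>
    ln (enn2real (RN_deriv X V x)) = ln (enn2real (RN_deriv Q V x)) - ln (enn2real (RN_deriv Q X x))"
  using AE_ln_RN_deriv_quotient[OF Q.sigma_finite_measure_axioms assms(1) V.sigma_finite_measure_axioms
      assms(2) sets_V assms(3) absolutely_continuous_V[OF admissible_Q] assms(4)]
  by eventually_elim auto

lemma AE_RN_deriv_admissible_pair:
  assumes adm: "admissible S'" "admissible P'" and ac: "absolutely_continuous S' P'"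
  shows "AE x in V. RN_deriv S' P' x \<noteq> 0 \<and> RN_deriv S' P' x \<noteq> \<infinity> \<and>
    ln (enn2real (RN_deriv S' P' x)) = ln (enn2real (RN_deriv Q P' x)) - ln (enn2real (RN_deriv Q S' x))"
proof (rule absolutely_continuous_AE[OF _ absolutely_continuous_V[OF adm(2)]])
  show "sets V = sets P'" using sets_V admissible_sets[OF adm(2)] by simp
  have sets_P'_S': "sets P' = sets S'" using admissible_sets[OF adm(1)] admissible_sets[OF adm(2)] by simp
  show "AE x in P'. RN_deriv S' P' x \<noteq> 0 \<and> RN_deriv S' P' x \<noteq> \<infinity> \<and>
    ln (enn2real (RN_deriv S' P' x)) = ln (enn2real (RN_deriv Q P' x)) - ln (enn2real (RN_deriv Q S' x))"
    using AE_RN_deriv_neq_0_top[OF admissible_sigma_finite[OF adm(1)] admissible_sigma_finite[OF adm(2)] ac sets_P'_S']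
      AE_ln_RN_deriv_quotient[OF Q.sigma_finite_measure_axioms admissible_sigma_finite[OF adm(1)]
        admissible_sigma_finite[OF adm(2)] admissible_sets[OF adm(1)] admissible_sets[OF adm(2)]
        admissible_absolutely_continuous[OF adm(1)] admissible_absolutely_continuous[OF adm(2)] ac]
    by eventually_elim auto
qed

lemma AE_ln_RN_deriv_density_quotient:
  assumes adm: "admissible R" "admissible S'" "admissible P'"
    and ac_S'P': "absolutely_continuous S' P'"
    and fin: "finite_measure (density Q (\<lambda>x. RN_deriv Q R x * inverse (RN_deriv S' P' x)))"
      (is "finite_measure ?S")
  shows "absolutely_continuous ?S V"
    and "AE x in V. ln (enn2real (RN_deriv ?S V x))
      = ln (enn2real (RN_deriv R V x)) + ln (enn2real (RN_deriv S' V x)) - ln (enn2real (RN_deriv P' V x))"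
proof -
  define h where "h x = RN_deriv Q R x * inverse (RN_deriv S' P' x)" for x
  have ln_V: "AE x in V. 0 < enn2real (RN_deriv Q X x) \<and>
      ln (enn2real (RN_deriv X V x)) = ln (enn2real (RN_deriv Q V x)) - ln (enn2real (RN_deriv Q X x))"
    if "admissible X" for X
    using that by (intro AE_ln_RN_deriv_V admissible_sigma_finite admissible_sets
        admissible_absolutely_continuous absolutely_continuous_V)
  note pair = AE_RN_deriv_admissible_pair[OF adm(2,3) ac_S'P']
  have [measurable]: "h \<in> borel_measurable Q"
    using borel_measurable_RN_deriv_sets_eq[OF admissible_sets[OF adm(2)]] unfolding h_def by measurable
  have "AE x in V. h x \<noteq> 0"
    using ln_V[OF adm(1)] pair by eventually_elim (auto simp: h_def)
  then show ac_SV: "absolutely_continuous ?S V"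
    unfolding h_def[symmetric]
    by (rule absolutely_continuous_density[OF sets_V absolutely_continuous_V[OF admissible_Q], rotated]) simp
  have "AE x in Q. h x = RN_deriv Q ?S x"
    unfolding h_def[symmetric] by (rule Q.RN_deriv_unique) simp_all
  then have h_eq: "AE x in V. h x = RN_deriv Q ?S x"
    by (rule absolutely_continuous_AE[OF sets_V absolutely_continuous_V[OF admissible_Q]])
  have "absolutely_continuous Q ?S"
    unfolding h_def[symmetric] by (rule absolutely_continuousI_density) measurable
  note ln_S = AE_ln_RN_deriv_V[OF finite_measure.axioms(1)[OF fin] sets_density this ac_SV]
  show "AE x in V. ln (enn2real (RN_deriv ?S V x))
      = ln (enn2real (RN_deriv R V x)) + ln (enn2real (RN_deriv S' V x)) - ln (enn2real (RN_deriv P' V x))"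
    using ln_S h_eq ln_V[OF adm(1)] ln_V[OF adm(2)] ln_V[OF adm(3)] pair
  proof eventually_elim
    case (elim x)
    obtain \<rho> where \<rho>: "RN_deriv S' P' x = ennreal \<rho>" "0 < \<rho>"
      using elim(6) by (cases "RN_deriv S' P' x") (auto simp: top_ennreal_def)
    have "enn2real (RN_deriv Q ?S x) = enn2real (RN_deriv Q R x) / \<rho>"
      using elim(2)[symmetric] \<rho> by (simp add: h_def inverse_ennreal enn2real_mult divide_inverse)
    then have "ln (enn2real (RN_deriv Q ?S x)) = ln (enn2real (RN_deriv Q R x)) - ln \<rho>"
      using elim(3) \<rho>(2) by (simp add: ln_div)
    then show ?case using elim(1,3-6) \<rho> by simp
  qed
qed

lemma admissible_density_quotient:
  assumes adm: "admissible R" "admissible S'" "admissible P'"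
    and ac_S'P': "absolutely_continuous S' P'"
    and fin: "finite_measure (density Q (\<lambda>x. RN_deriv Q R x * inverse (RN_deriv S' P' x)))"
      (is "finite_measure ?S")
  shows "admissible ?S" and "I_V ?S + I_V P' = I_V R + I_V S'"
proof -
  let ?L = "\<lambda>X x. ln (enn2real (RN_deriv X V x))"
  note ln_S = AE_ln_RN_deriv_density_quotient[OF assms]
  have int_sum: "integrable V (\<lambda>x. ?L R x + ?L S' x - ?L P' x)"
    using adm by (simp add: integrable_ln_RN_deriv_V)
  have [measurable]: "?L ?S \<in> borel_measurable V"
    using borel_measurable_RN_deriv_sets_eq[of ?S V] sets_V by simp
  have [measurable]: "RN_deriv S' P' \<in> borel_measurable Q"
    by (rule borel_measurable_RN_deriv_sets_eq[OF admissible_sets[OF adm(2)]])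
  have "absolutely_continuous Q ?S"
    by (rule absolutely_continuousI_density) measurable
  moreover have "integrable V (?L ?S)"
    using int_sum by (rule integrable_cong_AE_imp) (use ln_S(2) in \<open>auto elim: eventually_mono\<close>)
  ultimately show "admissible ?S"
    using fin ln_S(1) by (intro admissibleI_integrable) auto
  have "I_V ?S = (\<integral>x. ?L R x + ?L S' x - ?L P' x \<partial>V)"
    unfolding I_V_def by (rule integral_cong_AE[OF _ borel_measurable_integrable[OF int_sum] ln_S(2)]) simp
  then show "I_V ?S + I_V P' = I_V R + I_V S'"
    using adm by (simp add: integrable_ln_RN_deriv_V I_V_def)
qed

end

locale iterated_I_projections = I_div_reference Q V
  for Q V :: "'a measure" +
  fixes t :: nat and C :: "nat \<Rightarrow> 'a measure set" and S P :: "nat \<Rightarrow> nat \<Rightarrow> 'a measure"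
    and B :: real
  assumes t: "1 \<le> t"
    and C_prob: "\<And>i. i \<in> {1..t} \<Longrightarrow> C i \<subseteq> {R. prob_on Q R}"
    and C_convex: "\<And>i. i \<in> {1..t} \<Longrightarrow> convex_meas_set (C i)"
    and V_in_C: "\<And>i. i \<in> {1..t} \<Longrightarrow> V \<in> C i"
    and S0: "\<And>i. S 0 i = Q" and P0: "\<And>i. P 0 i = Q"
    and S1: "\<And>n. n \<ge> 1 \<Longrightarrow> S n 1 = density Q (\<lambda>x.
               RN_deriv Q (P (n - 1) t) x * inverse (RN_deriv (S (n - 1) 1) (P (n - 1) 1) x))"
    and Si: "\<And>n i. n \<ge> 1 \<Longrightarrow> i \<in> {2..t} \<Longrightarrow> S n i = density Q (\<lambda>x.
               RN_deriv Q (P n (i - 1)) x * inverse (RN_deriv (S (n - 1) i) (P (n - 1) i) x))"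
    and P_proj: "\<And>n i. n \<ge> 1 \<Longrightarrow> i \<in> {1..t} \<Longrightarrow> is_I_proj (C i) (S n i) (P n i)"
    and finite_S: "\<And>n i. n \<ge> 1 \<Longrightarrow> i \<in> {1..t} \<Longrightarrow> finite_measure (S n i)"
    and mass_bound: "\<And>n i. n \<ge> 1 \<Longrightarrow> i \<in> {1..t} \<Longrightarrow> measure (S n i) (space (S n i)) \<le> B"
begin

interpretation Q: prob_space Q by (fact prob_Q)

definition prev :: "nat \<Rightarrow> nat \<Rightarrow> 'a measure" where
  "prev n i = (if i = 1 then P (n - 1) t else P n (i - 1))"

lemma S_eq_density:
  assumes "1 \<le> n" "i \<in> {1..t}"
  shows "S n i = density Q (\<lambda>x. RN_deriv Q (prev n i) x * inverse (RN_deriv (S (n - 1) i) (P (n - 1) i) x))"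
  using assms S1 Si by (cases "i = 1") (auto simp: prev_def)

lemma sets_S: "i \<in> {1..t} \<Longrightarrow> sets (S n i) = sets Q"
  by (cases "n = 0") (simp_all add: S0 S_eq_density)

lemma finite_measure_S: "i \<in> {1..t} \<Longrightarrow> finite_measure (S n i)"
  using finite_S[of n i] Q.finite_measure_axioms by (cases "n = 0") (auto simp: S0)

lemma
  assumes "1 \<le> n" "i \<in> {1..t}"
  shows P_in_C: "P n i \<in> C i" and I_div_P_S_finite: "I_div (P n i) (S n i) < \<infinity>"
  using P_proj[OF assms] unfolding is_I_proj_def by blast+

lemma prob_P: "i \<in> {1..t} \<Longrightarrow> prob_space (P n i) \<and> sets (P n i) = sets Q"
  using P_in_C[of n i] C_prob[of i] prob_Q by (cases "n = 0") (auto simp: P0 prob_on_def)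

lemma absolutely_continuous_S_P: "i \<in> {1..t} \<Longrightarrow> absolutely_continuous (S n i) (P n i)"
  using I_div_P_S_finite[of n i]
  by (cases "n = 0") (auto simp: S0 P0 absolutely_continuous_def I_div_def split: if_splits)

lemma pythagorean_P_S:
  assumes "1 \<le> n" "i \<in> {1..t}" "admissible (S n i)"
  shows "I_div V (P n i) < \<infinity>" and "I_div V (P n i) + I_div (P n i) (S n i) \<le> I_div V (S n i)"
proof -
  have "C i \<subseteq> {R. prob_on (S n i) R}"
    using C_prob[OF assms(2)] sets_S[OF assms(2)] by (auto simp: prob_on_def)
  note pythagorean = finite_measure_S[OF assms(2)] this C_convex[OF assms(2)] P_proj[OF assms(1,2)]
    V_in_C[OF assms(2)]
  show "I_div V (P n i) < \<infinity>" and "I_div V (P n i) + I_div (P n i) (S n i) \<le> I_div V (S n i)"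
    using assms(3) I_div_to_I_projection_finite[OF pythagorean] I_projection_pythagorean[OF pythagorean]
    by (simp_all add: admissible_def)
qed

lemma admissible_step:
  assumes n: "1 \<le> n" and i: "i \<in> {1..t}"
    and adm: "admissible (prev n i)" "admissible (S (n - 1) i)" "admissible (P (n - 1) i)"
  shows "admissible (S n i)" and "admissible (P n i)"
    and "I_V (S n i) + I_V (P (n - 1) i) = I_V (prev n i) + I_V (S (n - 1) i)"
proof -
  note S_n = S_eq_density[OF n i]
  note quotient = admissible_density_quotient[OF adm absolutely_continuous_S_P[OF i],
      folded S_n, OF finite_measure_S[OF i]]
  show adm_S: "admissible (S n i)" by (fact quotient(1))
  show "I_V (S n i) + I_V (P (n - 1) i) = I_V (prev n i) + I_V (S (n - 1) i)" by (fact quotient(2))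
  have "absolutely_continuous Q (P n i)"
    using adm_S absolutely_continuous_S_P[OF i]
    by (auto simp: admissible_def intro: absolutely_continuous_trans)
  then show "admissible (P n i)"
    using prob_P[OF i] pythagorean_P_S(1)[OF n i adm_S]
    by (simp add: admissible_def prob_space.finite_measure)
qed

lemma admissible_S_P:
  assumes "i \<in> {1..t}"
  shows "admissible (S n i) \<and> admissible (P n i)"
  using assms
proof (induction "n * t + i" arbitrary: n i rule: less_induct)
  case less
  show ?case
  proof (cases "n = 0")
    case True
    then show ?thesis by (simp add: S0 P0 admissible_Q)
  next
    case False
    then have n: "1 \<le> n" by simp
    have "admissible (prev n i)"
    proof (cases "i = 1")
      case True
      have "(n - 1) * t + t < n * t + i" using n \<open>i = 1\<close> by (cases n) auto
      then show ?thesis using less.hyps[of "n - 1" t] t True by (simp add: prev_def)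
    next
      case False
      with less.prems have "i - 1 \<in> {1..t}" by auto
      with False show ?thesis using less.hyps[of n "i - 1"] less.prems by (simp add: prev_def)
    qed
    moreover have "(n - 1) * t + i < n * t + i" using n t by (cases n) auto
    ultimately show ?thesis
      using admissible_step[OF n less.prems] less.hyps[of "n - 1" i] less.prems by blast
  qed
qed

lemma I_V_recursion:
  assumes "1 \<le> n" "i \<in> {1..t}"
  shows "I_V (S n i) + I_V (P (n - 1) i) = I_V (prev n i) + I_V (S (n - 1) i)"
proof -
  have "admissible (prev n i)"
  proof (cases "i = 1")
    case False
    with assms(2) have "i - 1 \<in> {1..t}" by auto
    with False show ?thesis using admissible_S_P by (simp add: prev_def)
  qed (use t admissible_S_P in \<open>simp add: prev_def\<close>)
  then show ?thesis using assms admissible_S_P by (intro admissible_step(3)) auto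
qed

lemma I_div_P_S_le_gap:
  assumes "1 \<le> n" "i \<in> {1..t}"
  shows "I_div (P n i) (S n i) \<le> ereal (I_V (S n i) - I_V (P n i))"
proof -
  have "ereal (I_V (P n i)) + I_div (P n i) (S n i) \<le> ereal (I_V (S n i))"
    using pythagorean_P_S(2)[OF assms] admissible_S_P[OF assms(2)] by (simp add: I_div_eq_I_V)
  then show ?thesis by (cases "I_div (P n i) (S n i)") auto
qed

lemma gap_ge_minus_B:
  assumes "1 \<le> n" "i \<in> {1..t}"
  shows "- B \<le> I_V (S n i) - I_V (P n i)"
proof -
  have "ereal (- measure (S n i) (space (S n i))) \<le> I_div (P n i) (S n i)"
    using finite_measure_S prob_P absolutely_continuous_S_P sets_S assms(2)
    by (intro I_div_ge_minus_mass) auto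
  from order.trans[OF this I_div_P_S_le_gap[OF assms]]
  have "- measure (S n i) (space (S n i)) \<le> I_V (S n i) - I_V (P n i)"
    by simp
  with mass_bound[OF assms] show ?thesis by simp
qed

lemma gap_sum:
  "(\<Sum>i=1..t. I_V (S n i) - I_V (P n i)) + I_V (P n t) = I_V Q"
proof (induction n)
  case 0
  show ?case using t by (simp add: S0 P0)
next
  case (Suc n)
  define a where "a j = (if j = 0 then I_V (P n t) else I_V (P (Suc n) j))" for j
  have "I_V (S (Suc n) i) - I_V (P (Suc n) i) = (a (i - 1) - a i) + (I_V (S n i) - I_V (P n i))"
    if "i \<in> {1..t}" for i
    using I_V_recursion[of "Suc n" i] that by (auto simp: a_def prev_def)
  then have "(\<Sum>i=1..t. I_V (S (Suc n) i) - I_V (P (Suc n) i))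
      = (\<Sum>i=1..t. a (i - 1) - a i) + (\<Sum>i=1..t. I_V (S n i) - I_V (P n i))"
    by (simp add: sum.distrib)
  also have "(\<Sum>i=1..t. a (i - 1) - a i) = a 0 - a t"
    by (induction t) auto
  finally show ?case using Suc.IH t by (simp add: a_def)
qed

lemma I_div_P_S_bounded:
  assumes "1 \<le> n" "i \<in> {1..t}"
  shows "I_div (P n i) (S n i) \<le> ereal (I_V Q + 1 + real (t - 1) * B)"
proof -
  have "real (card ({1..t} - {i})) * - B \<le> (\<Sum>j\<in>{1..t} - {i}. I_V (S n j) - I_V (P n j))"
    using gap_ge_minus_B[OF assms(1)] by (intro sum_bounded_below) auto
  then have "- (real (t - 1) * B) \<le> (\<Sum>j\<in>{1..t} - {i}. I_V (S n j) - I_V (P n j))"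
    using assms(2) by simp
  moreover have "- 1 \<le> I_V (P n t)"
    using I_V_ge_minus_mass[of "P n t"] admissible_S_P[of t n] prob_P[of t n] t
    by (simp add: prob_space.prob_space)
  moreover have "(\<Sum>j=1..t. I_V (S n j) - I_V (P n j))
      = (I_V (S n i) - I_V (P n i)) + (\<Sum>j\<in>{1..t} - {i}. I_V (S n j) - I_V (P n j))"
    using assms(2) by (simp add: sum.remove)
  ultimately have "I_V (S n i) - I_V (P n i) \<le> I_V Q + 1 + real (t - 1) * B"
    using gap_sum[of n] by linarith
  with I_div_P_S_le_gap[OF assms] show ?thesis by (simp add: order.trans)
qed

end

theorem lemma3p5:
  fixes Q :: "'a measure" and t :: nat and C :: "nat \<Rightarrow> 'a measure set"
    and S P :: "nat \<Rightarrow> nat \<Rightarrow> 'a measure"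
  assumes Q: "prob_space Q"
    and t: "t \<ge> 1"
    and C_prob: "\<And>i. i \<in> {1..t} \<Longrightarrow> C i \<subseteq> {R. prob_on Q R}"
    and C_convex: "\<And>i. i \<in> {1..t} \<Longrightarrow> convex_meas_set (C i)"
    and C_closed: "\<And>i. i \<in> {1..t} \<Longrightarrow> variation_closed Q (C i)"
    and V: "\<exists>V. (\<forall>i\<in>{1..t}. V \<in> C i) \<and> I_div V Q < \<infinity>"
    and S0: "\<And>i. S 0 i = Q" and P0: "\<And>i. P 0 i = Q"
    and S1: "\<And>n. n \<ge> 1 \<Longrightarrow> S n 1 = density Q (\<lambda>x.
               RN_deriv Q (P (n - 1) t) x * inverse (RN_deriv (S (n - 1) 1) (P (n - 1) 1) x))"
    and Si: "\<And>n i. n \<ge> 1 \<Longrightarrow> i \<in> {2..t} \<Longrightarrow> S n i = density Q (\<lambda>x.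
               RN_deriv Q (P n (i - 1)) x * inverse (RN_deriv (S (n - 1) i) (P (n - 1) i) x))"
    and Pproj: "\<And>n i. n \<ge> 1 \<Longrightarrow> i \<in> {1..t} \<Longrightarrow> is_I_proj (C i) (S n i) (P n i)"
    and A: "\<exists>B::ennreal. B < \<infinity> \<and>
              (\<forall>n\<ge>1. \<forall>i\<in>{1..t}. emeasure (S n i) (space (S n i)) \<le> B)"
  shows "\<exists>B::real. \<forall>n\<ge>1. \<forall>i\<in>{1..t}. I_div (P n i) (S n i) \<le> ereal B"
proof -
  obtain V where V_in_C: "\<And>i. i \<in> {1..t} \<Longrightarrow> V \<in> C i" and I_div_V_Q: "I_div V Q < \<infinity>"
    using V by blast
  obtain B :: ennreal where "B < \<infinity>"
    and mass: "\<And>n i. n \<ge> 1 \<Longrightarrow> i \<in> {1..t} \<Longrightarrow> emeasure (S n i) (space (S n i)) \<le> B"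
    using A by blast
  have finite_S: "finite_measure (S n i)" and measure_S: "measure (S n i) (space (S n i)) \<le> enn2real B"
    if "n \<ge> 1" "i \<in> {1..t}" for n i
  proof -
    have "emeasure (S n i) (space (S n i)) \<noteq> \<infinity>"
      using mass[OF that] \<open>B < \<infinity>\<close> by (auto simp: top_unique)
    then show "finite_measure (S n i)" by (rule finite_measureI)
    show "measure (S n i) (space (S n i)) \<le> enn2real B"
      using mass[OF that] \<open>B < \<infinity>\<close> by (simp add: measure_def enn2real_mono)
  qed
  have "prob_space V" "sets V = sets Q" using C_prob V_in_C t by (auto simp: prob_on_def)
  \<comment> \<open>Variation-closedness of the \<open>C i\<close> only serves the existence of the I-projections,
    which \<open>Pproj\<close> already provides.\<close>
  interpret iterated_I_projections Q V t C S P "enn2real B"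
    by (intro iterated_I_projections.intro I_div_reference.intro iterated_I_projections_axioms.intro)
      (fact Q \<open>prob_space V\<close> \<open>sets V = sets Q\<close> I_div_V_Q t C_prob C_convex V_in_C S0 P0 S1 Si Pproj
        finite_S measure_S)+
  show ?thesis using I_div_P_S_bounded by blast
qed

end
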